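(* Let $w\in\mathbb{C}^k$ be a unit vector with $w_i\ne0$ for all $i\in\{1,\ldots,k\}$, let $R'$ be a tolerance relation on $\{1,\ldots,k\}$ and $T':M_k(\mathbb{C})\to A(R')$, $T'(b)=\sum_{(i,j)\in R'}E_{ii}bE_{jj}$, the corresponding truncation map. If $T'(P_w)$ is the weak density matrix of a pure state of $A(R')$ (i.e. the state $a\mapsto \mathrm{Tr}(T'(P_w)a)$ on $A(R')$ is pure), then the graph of $R'$ is connected.
   Context: A tolerance relation is a reflexive and symmetric relation; its graph has an edge between $i\ne j$ whenever $(i,j)\in R'$. $A(R')=T'(M_k(\mathbb{C}))$ is the operator system of matrices vanishing at positions outside $R'$; its states are linear functionals $\varphi$ with $\varphi(a)\ge0$ for positive semidefinite $a\in A(R')$ and $\varphi(1)=1$, and pure states are extremal states. $P_w=(w_i\overline{w_j})_{i,j}$. *)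

theory Defs
  imports "HOL-Analysis.Analysis" "HOL-Library.Complex_Order"
begin

text \<open>Indices {1..k} are modelled by a finite type 'n (k = CARD('n)).
  Matrices in M_k(C) are complex^'n^'n.\<close>

definition tolerance :: "('n \<times> 'n) set \<Rightarrow> bool" where
  "tolerance R \<longleftrightarrow> refl R \<and> sym R"

definition graph_edges :: "('n \<times> 'n) set \<Rightarrow> ('n \<times> 'n) set" where
  "graph_edges R = {(i, j). (i, j) \<in> R \<and> i \<noteq> j}"

definition graph_connected :: "('n \<times> 'n) set \<Rightarrow> bool" where
  "graph_connected R \<longleftrightarrow> (\<forall>i j. (i, j) \<in> (graph_edges R)\<^sup>*)"

definition opsys :: "('n::finite \<times> 'n) set \<Rightarrow> (complex^'n^'n) set" where
  "opsys R = {a. \<forall>i j. (i, j) \<notin> R \<longrightarrow> a $ i $ j = 0}"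

text \<open>Truncation map T(b) = sum over (i,j) in R of E_ii b E_jj.\<close>
definition trunc :: "('n::finite \<times> 'n) set \<Rightarrow> complex^'n^'n \<Rightarrow> complex^'n^'n" where
  "trunc R b = (\<chi> i j. if (i, j) \<in> R then b $ i $ j else 0)"

definition rank_one_proj :: "complex^'n \<Rightarrow> complex^'n^'n" where
  "rank_one_proj w = (\<chi> i j. w $ i * cnj (w $ j))"

text \<open>Positive semidefinite: x* a x \<ge> 0 (in the complex order, i.e. real and
  nonnegative) for all x.\<close>
definition psd :: "complex^'n::finite^'n \<Rightarrow> bool" where
  "psd a \<longleftrightarrow> (\<forall>x::complex^'n. 0 \<le> (\<Sum>i\<in>UNIV. cnj (x $ i) * (a *v x) $ i))"

text \<open>States of the operator system A(R): linear on A(R), positive, unital.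
  Functionals are represented as functions on all matrices; only their values on
  A(R) matter.\<close>
definition is_state :: "('n::finite \<times> 'n) set \<Rightarrow> (complex^'n^'n \<Rightarrow> complex) \<Rightarrow> bool" where
  "is_state R \<phi> \<longleftrightarrow>
     (\<forall>a\<in>opsys R. \<forall>b\<in>opsys R. \<phi> (a + b) = \<phi> a + \<phi> b) \<and>
     (\<forall>a\<in>opsys R. \<forall>c::complex. \<phi> ((\<chi> i j. c * a $ i $ j)) = c * \<phi> a) \<and>
     (\<forall>a\<in>opsys R. psd a \<longrightarrow> 0 \<le> \<phi> a) \<and>
     \<phi> (mat 1) = 1"

definition is_pure_state :: "('n::finite \<times> 'n) set \<Rightarrow> (complex^'n^'n \<Rightarrow> complex) \<Rightarrow> bool" where
  "is_pure_state R \<phi> \<longleftrightarrow> is_state R \<phi> \<and>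
     (\<forall>\<phi>1 \<phi>2 (t::real). is_state R \<phi>1 \<and> is_state R \<phi>2 \<and> 0 < t \<and> t < 1 \<and>
        (\<forall>a\<in>opsys R. \<phi> a = t * \<phi>1 a + (1 - t) * \<phi>2 a)
        \<longrightarrow> (\<forall>a\<in>opsys R. \<phi>1 a = \<phi> a \<and> \<phi>2 a = \<phi> a))"

end

theory Submission
  imports Defs
begin

text \<open>If the graph of R is disconnected, let S be a connected component. No entry of a
  matrix in A(R) links S with its complement, so on A(R) the state a \<mapsto> Tr(T'(P_w) a) equals
  \<langle>w, a w\<rangle> and is the convex combination, with weight the squared norm of w_S, of the vector
  states of the two pieces w_S and w_{-S} of w. Both pieces are nonzero because w has no zero
  entry, and the two vector states differ on a diagonal matrix unit, so the state is not
  pure.\<close>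

definition qform :: "complex^'n::finite \<Rightarrow> complex^'n^'n \<Rightarrow> complex" where
  "qform x a = (\<Sum>i\<in>UNIV. cnj (x $ i) * (a *v x) $ i)"

definition vector_state :: "complex^'n::finite \<Rightarrow> complex^'n^'n \<Rightarrow> complex" where
  "vector_state x a = qform x a / of_real ((norm x)\<^sup>2)"

definition matrix_unit :: "'n::finite \<Rightarrow> 'n \<Rightarrow> complex^'n^'n" where
  "matrix_unit k l = (\<chi> i j. if i = k \<and> j = l then 1 else 0)"

definition restrict_vec :: "'n set \<Rightarrow> 'a::zero^'n \<Rightarrow> 'a^'n" where
  "restrict_vec S x = (\<chi> i. if i \<in> S then x $ i else 0)"

lemma psd_iff_qform_nonneg: "psd a \<longleftrightarrow> (\<forall>x. 0 \<le> qform x a)"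
  by (simp add: psd_def qform_def)

lemma qform_expand: "qform x a = (\<Sum>i\<in>UNIV. \<Sum>j\<in>UNIV. cnj (x $ i) * a $ i $ j * x $ j)"
  by (simp add: qform_def matrix_vector_mult_def sum_distrib_left mult.assoc)

lemma qform_add_right: "qform x (a + b) = qform x a + qform x b"
  by (simp add: qform_expand algebra_simps sum.distrib)

lemma qform_scale_right: "qform x (\<chi> i j. c * a $ i $ j) = c * qform x a"
  by (simp add: qform_expand sum_distrib_left mult_ac)

lemma power2_norm_vec: "(norm x)\<^sup>2 = (\<Sum>i\<in>UNIV. (norm (x $ i))\<^sup>2)"
  by (simp add: norm_vec_def L2_set_def sum_nonneg)

lemma cnj_mult_self: "cnj z * z = of_real ((cmod z)\<^sup>2)"
  by (simp add: complex_norm_square mult.commute del: of_real_power)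

lemma qform_diagonal:
  "qform x (\<chi> i j. if i = j then d i else 0) = (\<Sum>i\<in>UNIV. d i * of_real ((cmod (x $ i))\<^sup>2))"
proof -
  have "qform x (\<chi> i j. if i = j then d i else 0) = (\<Sum>i\<in>UNIV. d i * (cnj (x $ i) * x $ i))"
    by (simp add: qform_expand if_distrib[of "\<lambda>y. y * _"] if_distrib[of "\<lambda>y. _ * y"] mult_ac
        cong: if_cong)
  then show ?thesis
    by (simp only: cnj_mult_self)
qed

lemma qform_mat_1: "qform x (mat 1) = of_real ((norm x)\<^sup>2)"
proof -
  have diag: "mat 1 = ((\<chi> i j. if i = j then 1 else 0) :: complex^'n^'n)"
    by (simp add: mat_def)
  show ?thesis
    unfolding diag qform_diagonal by (simp add: power2_norm_vec)
qed

lemma qform_matrix_unit_diag: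
  fixes x :: "complex^'n::finite"
  shows "qform x (matrix_unit k k) = of_real ((cmod (x $ k))\<^sup>2)"
proof -
  have diag: "matrix_unit k k =
      ((\<chi> i j. if i = j then (if i = k then 1 else 0) else 0) :: complex^'n^'n)"
    by (simp add: matrix_unit_def vec_eq_iff)
  show ?thesis
    unfolding diag qform_diagonal by (simp add: if_distrib[of "\<lambda>y. y * _"] cong: if_cong)
qed

lemma is_state_vector_state:
  assumes "x \<noteq> 0"
  shows "is_state R (vector_state x)"
proof -
  have "0 < (norm x)\<^sup>2"
    using assms by simp
  then have "0 \<le> complex_of_real (inverse ((norm x)\<^sup>2))"
    by (simp add: less_eq_complex_def)
  then have "0 \<le> vector_state x a" if "psd a" for a
    using that by (simp add: vector_state_def psd_iff_qform_nonneg divide_inverse mult.commute)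
  moreover have "vector_state x (mat 1) = 1"
    using assms by (simp add: vector_state_def qform_mat_1)
  ultimately show ?thesis
    unfolding is_state_def vector_state_def
    by (simp add: qform_add_right qform_scale_right add_divide_distrib)
qed

lemma restrict_vec_eq_0_iff: "restrict_vec S x = 0 \<longleftrightarrow> (\<forall>i\<in>S. x $ i = 0)"
  by (auto simp: restrict_vec_def vec_eq_iff)

lemma power2_norm_restrict_vec_split:
  "(norm (restrict_vec S x))\<^sup>2 + (norm (restrict_vec (-S) x))\<^sup>2 = (norm x)\<^sup>2"
  unfolding power2_norm_vec sum.distrib[symmetric]
  by (intro sum.cong) (auto simp: restrict_vec_def)

lemma qform_restrict_vec_split:
  assumes "\<And>i j. a $ i $ j \<noteq> 0 \<Longrightarrow> i \<in> S \<longleftrightarrow> j \<in> S"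
  shows "qform x a = qform (restrict_vec S x) a + qform (restrict_vec (-S) x) a"
proof -
  have "cnj (x $ i) * a $ i $ j * x $ j =
      cnj (restrict_vec S x $ i) * a $ i $ j * restrict_vec S x $ j +
      cnj (restrict_vec (-S) x $ i) * a $ i $ j * restrict_vec (-S) x $ j" for i j
    using assms[of i j] by (cases "a $ i $ j = 0") (auto simp: restrict_vec_def)
  then show ?thesis
    unfolding qform_expand sum.distrib[symmetric] by presburger
qed

text \<open>The truncation only removes entries of P_w that meet zero entries of a.\<close>
lemma trace_trunc_rank_one_proj:
  assumes "sym R" and "a \<in> opsys R"
  shows "trace (trunc R (rank_one_proj w) ** a) = qform w a"
proof -
  have "(if (i, j) \<in> R then w $ i * cnj (w $ j) else 0) * a $ j $ i =
      cnj (w $ j) * a $ j $ i * w $ i" for i j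
  proof (cases "(i, j) \<in> R")
    case False
    then have "(j, i) \<notin> R"
      using \<open>sym R\<close> by (auto dest: symD)
    then show ?thesis
      using \<open>a \<in> opsys R\<close> False by (simp add: opsys_def)
  qed simp
  then have "trace (trunc R (rank_one_proj w) ** a) =
      (\<Sum>i\<in>UNIV. \<Sum>j\<in>UNIV. cnj (w $ j) * a $ j $ i * w $ i)"
    by (simp add: trace_def matrix_matrix_mult_def trunc_def rank_one_proj_def if_distrib
        cong: if_cong)
  also have "\<dots> = qform w a"
    unfolding qform_expand by (rule sum.swap)
  finally show ?thesis .
qed

lemma is_pure_stateD:
  fixes t :: real
  assumes "is_pure_state R \<phi>" and "is_state R \<phi>1" and "is_state R \<phi>2" and "0 < t" and "t < 1"
    and "\<And>a. a \<in> opsys R \<Longrightarrow> \<phi> a = of_real t * \<phi>1 a + (1 - of_real t) * \<phi>2 a"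
    and "a \<in> opsys R"
  shows "\<phi>1 a = \<phi> a \<and> \<phi>2 a = \<phi> a"
proof -
  have "0 < complex_of_real t" "complex_of_real t < 1"
    using assms(4,5) by (simp_all add: less_complex_def)
  then have "\<forall>a\<in>opsys R. \<phi>1 a = \<phi> a \<and> \<phi>2 a = \<phi> a"
    using assms(1) unfolding is_pure_state_def
    by (elim conjE allE[where x = \<phi>1] allE[where x = \<phi>2] allE[where x = t] impE)
      (use assms(2,3,6) in auto)
  then show ?thesis
    using assms(7) by blast
qed

lemma pure_qform_state_restrict_vec_eq_0:
  fixes w :: "complex^'n::finite"
  assumes "norm w = 1"
    and "refl R"
    and pure: "is_pure_state R \<phi>"
    and \<phi>_eq: "\<And>a. a \<in> opsys R \<Longrightarrow> \<phi> a = qform w a"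
    and S_closed: "\<And>i j. (i, j) \<in> R \<Longrightarrow> i \<in> S \<longleftrightarrow> j \<in> S"
  shows "restrict_vec S w = 0 \<or> restrict_vec (-S) w = 0"
proof (rule ccontr)
  define u where "u = restrict_vec S w"
  define v where "v = restrict_vec (-S) w"
  define t where "t = (norm u)\<^sup>2"
  assume "\<not> (restrict_vec S w = 0 \<or> restrict_vec (-S) w = 0)"
  then have "u \<noteq> 0" "v \<noteq> 0"
    by (auto simp: u_def v_def)
  have "t + (norm v)\<^sup>2 = 1"
    using power2_norm_restrict_vec_split[of S w] assms(1) by (simp add: t_def u_def v_def)
  moreover have "0 < t" "0 < (norm v)\<^sup>2"
    using \<open>u \<noteq> 0\<close> \<open>v \<noteq> 0\<close> by (simp_all add: t_def)
  ultimately have "0 < t" "t < 1" "1 - t = (norm v)\<^sup>2"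
    by linarith+
  then have "1 - complex_of_real t = of_real ((norm v)\<^sup>2)"
    by (metis of_real_1 of_real_diff)
  have convex: "\<phi> a = of_real t * vector_state u a + (1 - of_real t) * vector_state v a"
    if "a \<in> opsys R" for a
  proof -
    have "\<And>i j. a $ i $ j \<noteq> 0 \<Longrightarrow> i \<in> S \<longleftrightarrow> j \<in> S"
      using that S_closed by (auto simp: opsys_def)
    then have "\<phi> a = qform u a + qform v a"
      unfolding \<phi>_eq[OF that] u_def v_def by (rule qform_restrict_vec_split)
    moreover have "qform u a = of_real t * vector_state u a"
      using \<open>0 < t\<close> by (simp add: vector_state_def t_def)
    moreover have "qform v a = (1 - of_real t) * vector_state v a"
      unfolding \<open>1 - complex_of_real t = of_real ((norm v)\<^sup>2)\<close>
      using \<open>v \<noteq> 0\<close> by (simp add: vector_state_def)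
    ultimately show ?thesis
      by simp
  qed
  have "vector_state v a = \<phi> a" if "a \<in> opsys R" for a
    using is_pure_stateD[OF pure is_state_vector_state[OF \<open>u \<noteq> 0\<close>]
        is_state_vector_state[OF \<open>v \<noteq> 0\<close>] \<open>0 < t\<close> \<open>t < 1\<close> convex that]
    by blast
  moreover obtain k where "k \<in> S" "w $ k \<noteq> 0"
    using \<open>u \<noteq> 0\<close> by (auto simp: u_def restrict_vec_eq_0_iff)
  moreover have "matrix_unit k k \<in> opsys R"
    using \<open>refl R\<close> by (simp add: opsys_def matrix_unit_def refl_on_def)
  ultimately have "vector_state v (matrix_unit k k) = qform w (matrix_unit k k)"
    using \<phi>_eq by simp
  moreover have "v $ k = 0"
    using \<open>k \<in> S\<close> by (simp add: v_def restrict_vec_def)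
  ultimately show False
    using \<open>w $ k \<noteq> 0\<close> by (simp add: vector_state_def qform_matrix_unit_diag)
qed

lemma graph_component_closed:
  assumes "sym R" and "(i, j) \<in> R"
  shows "(c, i) \<in> (graph_edges R)\<^sup>* \<longleftrightarrow> (c, j) \<in> (graph_edges R)\<^sup>*"
proof (cases "i = j")
  case False
  with assms have "(i, j) \<in> graph_edges R" "(j, i) \<in> graph_edges R"
    by (auto simp: graph_edges_def sym_def)
  then show ?thesis
    by (meson rtrancl_into_rtrancl)
qed simp

theorem lemma4p14:
  fixes w :: "complex^'n::finite"
    and R :: "('n \<times> 'n) set"
  assumes "norm w = 1"
    and "\<forall>i. w $ i \<noteq> 0"
    and "tolerance R"
    and "is_pure_state R (\<lambda>a. trace (trunc R (rank_one_proj w) ** a))"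
  shows "graph_connected R"
proof (rule ccontr)
  assume "\<not> graph_connected R"
  then obtain c d where "(c, d) \<notin> (graph_edges R)\<^sup>*"
    unfolding graph_connected_def by blast
  define S where "S = {i. (c, i) \<in> (graph_edges R)\<^sup>*}"
  have "refl R" "sym R"
    using assms(3) by (simp_all add: tolerance_def)
  have "restrict_vec S w = 0 \<or> restrict_vec (-S) w = 0"
  proof (rule pure_qform_state_restrict_vec_eq_0[OF assms(1) \<open>refl R\<close> assms(4)])
    show "trace (trunc R (rank_one_proj w) ** a) = qform w a" if "a \<in> opsys R" for a
      using trace_trunc_rank_one_proj[OF \<open>sym R\<close> that] .
    show "i \<in> S \<longleftrightarrow> j \<in> S" if "(i, j) \<in> R" for i j
      using graph_component_closed[OF \<open>sym R\<close> that] by (simp add: S_def)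
  qed
  moreover have "c \<in> S" "d \<in> -S"
    using \<open>(c, d) \<notin> (graph_edges R)\<^sup>*\<close> by (simp_all add: S_def)
  ultimately show False
    using assms(2) by (auto simp: restrict_vec_eq_0_iff)
qed

end
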